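(* If $f:R\to S$ is a morphism of real semigroups, then $f$ is also a morphism between the associated real reduced multirings (with $a+b=D^t(a,b)$ and $-g=(-1)g$); hence the assignment sending a real semigroup to its associated real reduced multiring and each morphism to itself is a functor $M:\mathcal{RS}\to\mathcal{MR}_{red}$.
   Context: A ternary semigroup is $(S,\cdot,1,0,-1)$ with: $(S,\cdot,1)$ a commutative semigroup with unity; $x^3=x$; $-1\ne1$, $(-1)(-1)=1$; $x0=0$; $x=(-1)x\Rightarrow x=0$. A real semigroup is a ternary semigroup with a ternary relation $D$, where $a\in D^t(b,c)$ means $a\in D(b,c)$, $-b\in D(-a,c)$, $-c\in D(b,-a)$, satisfying: (RS0) $c\in D(a,b)\iff c\in D(b,a)$; (RS1) $a\in D(a,b)$; (RS2) $a\in D(b,c)\Rightarrow ad\in D(bd,cd)$; (RS3) $a\in D^t(b,c)$, $c\in D^t(d,e)\Rightarrow\exists x\in D^t(b,d)$ with $a\in D^t(x,e)$; (RS4) $e\in D(c^2a,d^2b)\Rightarrow e\in D(a,b)$; (RS5) $ad=bd$, $ae=be$, $c\in D(d,e)\Rightarrow ac=bc$; (RS6) $c\in D(a,b)\Rightarrow c\in D^t(c^2a,c^2b)$; (RS7) $D^t(a,-b)\cap D^t(b,-a)\ne\emptyset\Rightarrow a=b$; (RS8) $a\in D(b,c)\Rightarrow a^2\in D(b^2,c^2)$. A morphism of real semigroups $f$ satisfies $f(ab)=f(a)f(b)$, $f(1)=1$, $f(0)=0$, $f(-1)=-1$ and $a\in D(b,c)\Rightarrow f(a)\in D(f(b),f(c))$;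 $\mathcal{RS}$ is the resulting category. A multiring is a tuple $(R,+,\cdot,-,0,1)$ with $+:R\times R\to\mathcal P(R)\setminus\{\emptyset\}$ satisfying: $z\in x+y\Rightarrow x\in z+(-y)$ and $y\in(-x)+z$; $y\in0+x\iff y=x$; $+$ associative and commutative; $(R,\cdot,1)$ a commutative monoid; $a0=0$; $c\in a+b\Rightarrow cd\in ad+bd$. Real reduced: $1\ne0$, $a^3=a$, $c\in a+ab^2\Rightarrow c=a$, $c,d\in a^2+b^2\Rightarrow c=d$. Multiring morphisms satisfy $c\in a+b\Rightarrow f(c)\in f(a)+f(b)$, $f(-a)=-f(a)$, $f(0)=0$, $f(ab)=f(a)f(b)$, $f(1)=1$; $\mathcal{MR}_{red}$ is the category of real reduced multirings. *)

theory Defs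
  imports Main
begin

record 'a rsg =
  rs_carrier :: "'a set"
  rs_mul :: "'a \<Rightarrow> 'a \<Rightarrow> 'a"
  rs_one :: 'a
  rs_zero :: 'a
  rs_mone :: 'a
  rs_D :: "'a \<Rightarrow> 'a \<Rightarrow> 'a set"

definition rs_neg :: "('a, 'm) rsg_scheme \<Rightarrow> 'a \<Rightarrow> 'a" where
  "rs_neg G x = rs_mul G (rs_mone G) x"

definition rs_Dt :: "('a, 'm) rsg_scheme \<Rightarrow> 'a \<Rightarrow> 'a \<Rightarrow> 'a set" where
  "rs_Dt G b c = {a. a \<in> rs_D G b c \<and> rs_neg G b \<in> rs_D G (rs_neg G a) c
                    \<and> rs_neg G c \<in> rs_D G b (rs_neg G a)}"

definition ternary_semigroup :: "('a, 'm) rsg_scheme \<Rightarrow> bool" where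
  "ternary_semigroup G \<longleftrightarrow>
     (let S = rs_carrier G; m = rs_mul G in
       (\<forall>x\<in>S. \<forall>y\<in>S. m x y \<in> S) \<and>
       rs_one G \<in> S \<and> rs_zero G \<in> S \<and> rs_mone G \<in> S \<and>
       (\<forall>x\<in>S. \<forall>y\<in>S. \<forall>z\<in>S. m (m x y) z = m x (m y z)) \<and>
       (\<forall>x\<in>S. \<forall>y\<in>S. m x y = m y x) \<and>
       (\<forall>x\<in>S. m (rs_one G) x = x) \<and>
       (\<forall>x\<in>S. m (m x x) x = x) \<and>
       rs_mone G \<noteq> rs_one G \<and>
       m (rs_mone G) (rs_mone G) = rs_one G \<and>
       (\<forall>x\<in>S. m x (rs_zero G) = rs_zero G) \<and>
       (\<forall>x\<in>S. x = m (rs_mone G) x \<longrightarrow> x = rs_zero G))"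

definition real_semigroup :: "('a, 'm) rsg_scheme \<Rightarrow> bool" where
  "real_semigroup G \<longleftrightarrow>
     (let S = rs_carrier G; m = rs_mul G; D = rs_D G; Dt = rs_Dt G; n = rs_neg G in
       ternary_semigroup G \<and>
       (\<forall>a\<in>S. \<forall>b\<in>S. D a b \<subseteq> S) \<and>
       \<comment> \<open>RS0\<close>
       (\<forall>a\<in>S. \<forall>b\<in>S. \<forall>c\<in>S. c \<in> D a b \<longleftrightarrow> c \<in> D b a) \<and>
       \<comment> \<open>RS1\<close>
       (\<forall>a\<in>S. \<forall>b\<in>S. a \<in> D a b) \<and>
       \<comment> \<open>RS2\<close>
       (\<forall>a\<in>S. \<forall>b\<in>S. \<forall>c\<in>S. \<forall>d\<in>S. a \<in> D b c \<longrightarrow> m a d \<in> D (m b d) (m c d)) \<and>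
       \<comment> \<open>RS3\<close>
       (\<forall>a\<in>S. \<forall>b\<in>S. \<forall>c\<in>S. \<forall>d\<in>S. \<forall>e\<in>S.
          a \<in> Dt b c \<and> c \<in> Dt d e \<longrightarrow> (\<exists>x\<in>S. x \<in> Dt b d \<and> a \<in> Dt x e)) \<and>
       \<comment> \<open>RS4\<close>
       (\<forall>a\<in>S. \<forall>b\<in>S. \<forall>c\<in>S. \<forall>d\<in>S. \<forall>e\<in>S.
          e \<in> D (m (m c c) a) (m (m d d) b) \<longrightarrow> e \<in> D a b) \<and>
       \<comment> \<open>RS5\<close>
       (\<forall>a\<in>S. \<forall>b\<in>S. \<forall>c\<in>S. \<forall>d\<in>S. \<forall>e\<in>S.
          m a d = m b d \<and> m a e = m b e \<and> c \<in> D d e \<longrightarrow> m a c = m b c) \<and>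
       \<comment> \<open>RS6\<close>
       (\<forall>a\<in>S. \<forall>b\<in>S. \<forall>c\<in>S. c \<in> D a b \<longrightarrow> c \<in> Dt (m (m c c) a) (m (m c c) b)) \<and>
       \<comment> \<open>RS7\<close>
       (\<forall>a\<in>S. \<forall>b\<in>S. Dt a (n b) \<inter> Dt b (n a) \<noteq> {} \<longrightarrow> a = b) \<and>
       \<comment> \<open>RS8\<close>
       (\<forall>a\<in>S. \<forall>b\<in>S. \<forall>c\<in>S. a \<in> D b c \<longrightarrow> m a a \<in> D (m b b) (m c c)))"

definition rs_morphism :: "('a, 'm) rsg_scheme \<Rightarrow> ('b, 'n) rsg_scheme \<Rightarrow> ('a \<Rightarrow> 'b) \<Rightarrow> bool" where
  "rs_morphism G H f \<longleftrightarrow>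
     (\<forall>x\<in>rs_carrier G. f x \<in> rs_carrier H) \<and>
     (\<forall>a\<in>rs_carrier G. \<forall>b\<in>rs_carrier G. f (rs_mul G a b) = rs_mul H (f a) (f b)) \<and>
     f (rs_one G) = rs_one H \<and> f (rs_zero G) = rs_zero H \<and> f (rs_mone G) = rs_mone H \<and>
     (\<forall>a\<in>rs_carrier G. \<forall>b\<in>rs_carrier G. \<forall>c\<in>rs_carrier G.
        a \<in> rs_D G b c \<longrightarrow> f a \<in> rs_D H (f b) (f c))"

record 'a mring =
  mr_carrier :: "'a set"
  mr_add :: "'a \<Rightarrow> 'a \<Rightarrow> 'a set"
  mr_mul :: "'a \<Rightarrow> 'a \<Rightarrow> 'a"
  mr_neg :: "'a \<Rightarrow> 'a"
  mr_zero :: 'a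
  mr_one :: 'a

definition mr_set_add :: "('a, 'm) mring_scheme \<Rightarrow> 'a set \<Rightarrow> 'a \<Rightarrow> 'a set" where
  "mr_set_add R A z = (\<Union>a\<in>A. mr_add R a z)"

definition mr_add_set :: "('a, 'm) mring_scheme \<Rightarrow> 'a \<Rightarrow> 'a set \<Rightarrow> 'a set" where
  "mr_add_set R x A = (\<Union>a\<in>A. mr_add R x a)"

definition multiring :: "('a, 'm) mring_scheme \<Rightarrow> bool" where
  "multiring R \<longleftrightarrow>
     (let M = mr_carrier R; p = mr_add R; m = mr_mul R; n = mr_neg R in
       (\<forall>x\<in>M. \<forall>y\<in>M. p x y \<subseteq> M \<and> p x y \<noteq> {}) \<and>
       (\<forall>x\<in>M. n x \<in> M) \<and>
       (\<forall>x\<in>M. \<forall>y\<in>M. m x y \<in> M) \<and>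
       mr_zero R \<in> M \<and> mr_one R \<in> M \<and>
       (\<forall>x\<in>M. \<forall>y\<in>M. \<forall>z\<in>M. z \<in> p x y \<longrightarrow> x \<in> p z (n y) \<and> y \<in> p (n x) z) \<and>
       (\<forall>x\<in>M. \<forall>y\<in>M. y \<in> p (mr_zero R) x \<longleftrightarrow> y = x) \<and>
       (\<forall>x\<in>M. \<forall>y\<in>M. \<forall>z\<in>M. mr_set_add R (p x y) z = mr_add_set R x (p y z)) \<and>
       (\<forall>x\<in>M. \<forall>y\<in>M. p x y = p y x) \<and>
       (\<forall>x\<in>M. \<forall>y\<in>M. \<forall>z\<in>M. m (m x y) z = m x (m y z)) \<and>
       (\<forall>x\<in>M. \<forall>y\<in>M. m x y = m y x) \<and>
       (\<forall>x\<in>M. m (mr_one R) x = x) \<and>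
       (\<forall>a\<in>M. m a (mr_zero R) = mr_zero R) \<and>
       (\<forall>a\<in>M. \<forall>b\<in>M. \<forall>c\<in>M. \<forall>d\<in>M. c \<in> p a b \<longrightarrow> m c d \<in> p (m a d) (m b d)))"

definition real_reduced_multiring :: "('a, 'm) mring_scheme \<Rightarrow> bool" where
  "real_reduced_multiring R \<longleftrightarrow>
     (let M = mr_carrier R; p = mr_add R; m = mr_mul R in
       multiring R \<and>
       mr_one R \<noteq> mr_zero R \<and>
       (\<forall>a\<in>M. m (m a a) a = a) \<and>
       (\<forall>a\<in>M. \<forall>b\<in>M. \<forall>c\<in>M. c \<in> p a (m a (m b b)) \<longrightarrow> c = a) \<and>
       (\<forall>a\<in>M. \<forall>b\<in>M. \<forall>c\<in>M. \<forall>d\<in>M. c \<in> p (m a a) (m b b) \<and> d \<in> p (m a a) (m b b) \<longrightarrow> c = d))"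

definition mr_morphism :: "('a, 'm) mring_scheme \<Rightarrow> ('b, 'n) mring_scheme \<Rightarrow> ('a \<Rightarrow> 'b) \<Rightarrow> bool" where
  "mr_morphism R T f \<longleftrightarrow>
     (\<forall>x\<in>mr_carrier R. f x \<in> mr_carrier T) \<and>
     (\<forall>a\<in>mr_carrier R. \<forall>b\<in>mr_carrier R. \<forall>c\<in>mr_carrier R.
        c \<in> mr_add R a b \<longrightarrow> f c \<in> mr_add T (f a) (f b)) \<and>
     (\<forall>a\<in>mr_carrier R. f (mr_neg R a) = mr_neg T (f a)) \<and>
     f (mr_zero R) = mr_zero T \<and>
     (\<forall>a\<in>mr_carrier R. \<forall>b\<in>mr_carrier R. f (mr_mul R a b) = mr_mul T (f a) (f b)) \<and>
     f (mr_one R) = mr_one T"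

definition assoc_mr :: "('a, 'm) rsg_scheme \<Rightarrow> 'a mring" where
  "assoc_mr G = \<lparr> mr_carrier = rs_carrier G,
                 mr_add = (\<lambda>a b. rs_Dt G a b),
                 mr_mul = rs_mul G,
                 mr_neg = rs_neg G,
                 mr_zero = rs_zero G,
                 mr_one = rs_one G \<rparr>"

end

theory Submission
  imports Defs
begin

text \<open>Its multiring axioms are RS2 and RS3 read through the symmetries of \<open>D\<^sup>t\<close>; the
  substance lies in reducedness. Axiom RS7 forces \<open>D\<^sup>t(x,x) \<subseteq> {x}\<close>, and from this, with RS4 and RS5,
  every element of \<open>a + ab\<^sup>2\<close> equals \<open>a\<close> and \<open>a\<^sup>2 + b\<^sup>2\<close> has at most one element. Since \<open>D\<^sup>t\<close> is built
  from \<open>D\<close> and multiplication by \<open>-1\<close>, a morphism of real semigroups preserves it and is therefore a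
  multiring morphism.\<close>

lemma assoc_mr_simps [simp]:
  "mr_carrier (assoc_mr G) = rs_carrier G" "mr_add (assoc_mr G) = rs_Dt G"
  "mr_mul (assoc_mr G) = rs_mul G" "mr_neg (assoc_mr G) = rs_neg G"
  "mr_zero (assoc_mr G) = rs_zero G" "mr_one (assoc_mr G) = rs_one G"
  by (simp_all add: assoc_mr_def)

locale real_sgrp =
  fixes G :: "('a, 'm) rsg_scheme"
  assumes real_sg: "real_semigroup G"
begin

abbreviation S where "S \<equiv> rs_carrier G"
abbreviation mul (infixl "\<cdot>" 70) where "x \<cdot> y \<equiv> rs_mul G x y"
abbreviation one ("\<one>") where "\<one> \<equiv> rs_one G"
abbreviation zero ("\<zero>") where "\<zero> \<equiv> rs_zero G"
abbreviation mone where "mone \<equiv> rs_mone G"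
abbreviation neg where "neg x \<equiv> rs_neg G x"
abbreviation D where "D \<equiv> rs_D G"
abbreviation Dt where "Dt \<equiv> rs_Dt G"

text \<open>Stated verbatim as in the definition, so each is discharged by assumption rather than by
  proof search through the whole conjunction.\<close>
lemma axioms_bounded:
  "\<forall>x\<in>S. \<forall>y\<in>S. x \<cdot> y \<in> S" "\<one> \<in> S" "\<zero> \<in> S" "mone \<in> S"
  "\<forall>x\<in>S. \<forall>y\<in>S. \<forall>z\<in>S. x \<cdot> y \<cdot> z = x \<cdot> (y \<cdot> z)"
  "\<forall>x\<in>S. \<forall>y\<in>S. x \<cdot> y = y \<cdot> x"
  "\<forall>x\<in>S. \<one> \<cdot> x = x" "\<forall>x\<in>S. x \<cdot> x \<cdot> x = x"
  "mone \<noteq> \<one>" "mone \<cdot> mone = \<one>" "\<forall>x\<in>S. x \<cdot> \<zero> = \<zero>"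
  "\<forall>a\<in>S. \<forall>b\<in>S. D a b \<subseteq> S"
  "\<forall>a\<in>S. \<forall>b\<in>S. \<forall>c\<in>S. c \<in> D a b \<longleftrightarrow> c \<in> D b a"
  "\<forall>a\<in>S. \<forall>b\<in>S. a \<in> D a b"
  "\<forall>a\<in>S. \<forall>b\<in>S. \<forall>c\<in>S. \<forall>d\<in>S. a \<in> D b c \<longrightarrow> a \<cdot> d \<in> D (b \<cdot> d) (c \<cdot> d)"
  "\<forall>a\<in>S. \<forall>b\<in>S. \<forall>c\<in>S. \<forall>d\<in>S. \<forall>e\<in>S.
     a \<in> Dt b c \<and> c \<in> Dt d e \<longrightarrow> (\<exists>x\<in>S. x \<in> Dt b d \<and> a \<in> Dt x e)"
  "\<forall>a\<in>S. \<forall>b\<in>S. \<forall>c\<in>S. \<forall>d\<in>S. \<forall>e\<in>S. e \<in> D (c \<cdot> c \<cdot> a) (d \<cdot> d \<cdot> b) \<longrightarrow> e \<in> D a b"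
  "\<forall>a\<in>S. \<forall>b\<in>S. \<forall>c\<in>S. \<forall>d\<in>S. \<forall>e\<in>S.
     a \<cdot> d = b \<cdot> d \<and> a \<cdot> e = b \<cdot> e \<and> c \<in> D d e \<longrightarrow> a \<cdot> c = b \<cdot> c"
  "\<forall>a\<in>S. \<forall>b\<in>S. \<forall>c\<in>S. c \<in> D a b \<longrightarrow> c \<in> Dt (c \<cdot> c \<cdot> a) (c \<cdot> c \<cdot> b)"
  "\<forall>a\<in>S. \<forall>b\<in>S. Dt a (neg b) \<inter> Dt b (neg a) \<noteq> {} \<longrightarrow> a = b"
  using real_sg unfolding real_semigroup_def ternary_semigroup_def Let_def
  by - (elim conjE; assumption)+

lemma mul_closed [simp]: "x \<in> S \<Longrightarrow> y \<in> S \<Longrightarrow> x \<cdot> y \<in> S"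
  using axioms_bounded(1) by blast

lemma one_closed [simp]: "\<one> \<in> S" and zero_closed [simp]: "\<zero> \<in> S"
  and mone_closed [simp]: "mone \<in> S"
  using axioms_bounded(2-4) .

lemma mul_assoc: "x \<in> S \<Longrightarrow> y \<in> S \<Longrightarrow> z \<in> S \<Longrightarrow> x \<cdot> y \<cdot> z = x \<cdot> (y \<cdot> z)"
  using axioms_bounded(5) by blast

lemma mul_comm: "x \<in> S \<Longrightarrow> y \<in> S \<Longrightarrow> x \<cdot> y = y \<cdot> x"
  using axioms_bounded(6) by blast

lemma one_mul [simp]: "x \<in> S \<Longrightarrow> \<one> \<cdot> x = x"
  using axioms_bounded(7) by blast

lemma mul_cube [simp]: "x \<in> S \<Longrightarrow> x \<cdot> x \<cdot> x = x"
  using axioms_bounded(8) by blast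

lemma mone_neq_one: "mone \<noteq> \<one>" and mone_mone [simp]: "mone \<cdot> mone = \<one>"
  using axioms_bounded(9,10) .

lemma mul_zero [simp]: "x \<in> S \<Longrightarrow> x \<cdot> \<zero> = \<zero>"
  using axioms_bounded(11) by blast

lemma D_closed: "a \<in> S \<Longrightarrow> b \<in> S \<Longrightarrow> c \<in> D a b \<Longrightarrow> c \<in> S"
  using axioms_bounded(12) by blast

lemma D_commute: "a \<in> S \<Longrightarrow> b \<in> S \<Longrightarrow> c \<in> D a b \<Longrightarrow> c \<in> D b a"
  using axioms_bounded(13) D_closed by blast

lemma D_refl: "a \<in> S \<Longrightarrow> b \<in> S \<Longrightarrow> a \<in> D a b"
  using axioms_bounded(14) by blast

lemma D_mul: "a \<in> S \<Longrightarrow> b \<in> S \<Longrightarrow> c \<in> S \<Longrightarrow> d \<in> S \<Longrightarrow> a \<in> D b c \<Longrightarrow> a \<cdot> d \<in> D (b \<cdot> d) (c \<cdot> d)"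
  using axioms_bounded(15) by blast

lemma Dt_split:
  "a \<in> S \<Longrightarrow> b \<in> S \<Longrightarrow> c \<in> S \<Longrightarrow> d \<in> S \<Longrightarrow> e \<in> S \<Longrightarrow> a \<in> Dt b c \<Longrightarrow> c \<in> Dt d e \<Longrightarrow>
   \<exists>x\<in>S. x \<in> Dt b d \<and> a \<in> Dt x e"
  using axioms_bounded(16) by blast

lemma D_cancel_squares:
  "a \<in> S \<Longrightarrow> b \<in> S \<Longrightarrow> c \<in> S \<Longrightarrow> d \<in> S \<Longrightarrow> e \<in> S \<Longrightarrow> e \<in> D (c \<cdot> c \<cdot> a) (d \<cdot> d \<cdot> b) \<Longrightarrow>
   e \<in> D a b"
  using axioms_bounded(17) by blast

lemma mul_eq_on_D:
  "a \<in> S \<Longrightarrow> b \<in> S \<Longrightarrow> c \<in> S \<Longrightarrow> d \<in> S \<Longrightarrow> e \<in> S \<Longrightarrow> a \<cdot> d = b \<cdot> d \<Longrightarrow> a \<cdot> e = b \<cdot> e \<Longrightarrow>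
   c \<in> D d e \<Longrightarrow> a \<cdot> c = b \<cdot> c"
  using axioms_bounded(18) by blast

lemma D_imp_Dt: "a \<in> S \<Longrightarrow> b \<in> S \<Longrightarrow> c \<in> S \<Longrightarrow> c \<in> D a b \<Longrightarrow> c \<in> Dt (c \<cdot> c \<cdot> a) (c \<cdot> c \<cdot> b)"
  using axioms_bounded(19) by blast

lemma Dt_antisym: "a \<in> S \<Longrightarrow> b \<in> S \<Longrightarrow> x \<in> Dt a (neg b) \<Longrightarrow> x \<in> Dt b (neg a) \<Longrightarrow> a = b"
  using axioms_bounded(20) by blast

lemma neg_closed [simp]: "x \<in> S \<Longrightarrow> neg x \<in> S"
  by (simp add: rs_neg_def)

lemma mul_one [simp]: "x \<in> S \<Longrightarrow> x \<cdot> \<one> = x"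
  using mul_comm[of x \<one>] by simp

lemma zero_mul [simp]: "x \<in> S \<Longrightarrow> \<zero> \<cdot> x = \<zero>"
  using mul_comm[of x \<zero>] by simp

lemma mul_left_commute: "x \<in> S \<Longrightarrow> y \<in> S \<Longrightarrow> z \<in> S \<Longrightarrow> x \<cdot> (y \<cdot> z) = y \<cdot> (x \<cdot> z)"
  by (metis mul_assoc mul_comm)

lemmas mul_ac = mul_assoc mul_comm mul_left_commute

lemma mul_cube_right_assoc [simp]: "x \<in> S \<Longrightarrow> x \<cdot> (x \<cdot> x) = x"
  by (metis mul_assoc mul_cube)

lemma mul_cube_left [simp]: "x \<in> S \<Longrightarrow> y \<in> S \<Longrightarrow> x \<cdot> (x \<cdot> (x \<cdot> y)) = x \<cdot> y"
  by (metis mul_assoc mul_closed mul_cube)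

lemma neg_neg [simp]: "x \<in> S \<Longrightarrow> neg (neg x) = x"
  by (simp add: rs_neg_def mul_assoc[symmetric])

lemma neg_mul_left: "x \<in> S \<Longrightarrow> y \<in> S \<Longrightarrow> neg x \<cdot> y = neg (x \<cdot> y)"
  by (simp add: rs_neg_def mul_assoc)

lemma neg_mul_right: "x \<in> S \<Longrightarrow> y \<in> S \<Longrightarrow> x \<cdot> neg y = neg (x \<cdot> y)"
  by (simp add: rs_neg_def mul_left_commute)

lemma mul_mone: "x \<in> S \<Longrightarrow> x \<cdot> mone = neg x"
  by (simp add: rs_neg_def mul_comm)

lemma neg_zero [simp]: "neg \<zero> = \<zero>"
  by (simp add: rs_neg_def)

lemma one_neq_zero: "\<one> \<noteq> \<zero>"
  by (metis mone_closed mone_neq_one mul_one mul_zero)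

lemma mem_Dt_iff: "a \<in> Dt b c \<longleftrightarrow> a \<in> D b c \<and> neg b \<in> D (neg a) c \<and> neg c \<in> D b (neg a)"
  by (simp add: rs_Dt_def)

lemma Dt_closed: "a \<in> S \<Longrightarrow> b \<in> S \<Longrightarrow> c \<in> Dt a b \<Longrightarrow> c \<in> S"
  using D_closed mem_Dt_iff by blast

lemma D_neg: "a \<in> S \<Longrightarrow> b \<in> S \<Longrightarrow> c \<in> D a b \<Longrightarrow> neg c \<in> D (neg a) (neg b)"
proof -
  assume ab: "a \<in> S" "b \<in> S" and c: "c \<in> D a b"
  then have "c \<in> S" using D_closed by blast
  then show ?thesis using D_mul[OF _ ab mone_closed c] ab by (simp add: mul_mone)
qed

lemma D_neg_iff: "a \<in> S \<Longrightarrow> b \<in> S \<Longrightarrow> c \<in> S \<Longrightarrow> neg c \<in> D (neg a) (neg b) \<longleftrightarrow> c \<in> D a b"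
  using D_neg[of "neg a" "neg b" "neg c"] D_neg[of a b c] by auto

lemma zero_in_D: "a \<in> S \<Longrightarrow> b \<in> S \<Longrightarrow> \<zero> \<in> D a b"
proof -
  assume ab: "a \<in> S" "b \<in> S"
  have "\<zero> \<in> D \<zero> \<zero>" using D_mul[OF ab(1) ab zero_closed D_refl[OF ab]] ab by simp
  then show ?thesis using D_cancel_squares[of a b \<zero> \<zero> \<zero>] ab by simp
qed

lemma Dt_commute: "a \<in> S \<Longrightarrow> b \<in> S \<Longrightarrow> c \<in> Dt a b \<Longrightarrow> c \<in> Dt b a"
proof -
  assume ab: "a \<in> S" "b \<in> S" and c: "c \<in> Dt a b"
  then have "c \<in> S" using Dt_closed by blast
  with ab c show ?thesis unfolding mem_Dt_iff by (meson D_commute neg_closed)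
qed

lemma Dt_rotate: "x \<in> S \<Longrightarrow> y \<in> S \<Longrightarrow> z \<in> Dt x y \<Longrightarrow> x \<in> Dt z (neg y)"
proof -
  assume xy: "x \<in> S" "y \<in> S" and "z \<in> Dt x y"
  then have z: "z \<in> S" using Dt_closed by blast
  from \<open>z \<in> Dt x y\<close> have zD: "z \<in> D x y" and xD: "neg x \<in> D (neg z) y"
    and yD: "neg y \<in> D x (neg z)"
    by (simp_all add: mem_Dt_iff)
  have "x \<in> D z (neg y)" using D_neg[OF _ xy(2) xD] xy z by simp
  moreover have "neg z \<in> D (neg x) (neg y)" using D_neg[OF xy zD] .
  moreover have "neg (neg y) \<in> D z (neg x)"
    using D_commute[OF _ _ D_neg[OF xy(1) _ yD]] xy z by simp
  ultimately show ?thesis by (simp add: mem_Dt_iff)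
qed

lemma Dt_rotate': "x \<in> S \<Longrightarrow> y \<in> S \<Longrightarrow> z \<in> Dt x y \<Longrightarrow> y \<in> Dt (neg x) z"
  by (meson Dt_closed Dt_commute Dt_rotate neg_closed)

lemma self_in_Dt_zero: "x \<in> S \<Longrightarrow> x \<in> Dt x \<zero>"
  by (simp add: mem_Dt_iff D_refl zero_in_D)

lemma zero_in_Dt_neg: "y \<in> S \<Longrightarrow> \<zero> \<in> Dt y (neg y)"
  using D_commute[OF neg_closed zero_closed D_refl, of y] by (simp add: mem_Dt_iff zero_in_D D_refl)

lemma Dt_nonempty: "x \<in> S \<Longrightarrow> y \<in> S \<Longrightarrow> Dt x y \<noteq> {}"
  using Dt_split[of x x \<zero> y "neg y"] self_in_Dt_zero zero_in_Dt_neg by fastforce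

lemma Dt_zero_left_iff: "x \<in> S \<Longrightarrow> y \<in> S \<Longrightarrow> y \<in> Dt \<zero> x \<longleftrightarrow> y = x"
proof
  assume xy: "x \<in> S" "y \<in> S" and "y \<in> Dt \<zero> x"
  then have yD: "y \<in> D \<zero> x" and xD: "neg x \<in> D \<zero> (neg y)"
    by (auto simp: mem_Dt_iff)
  have "neg y \<in> D \<zero> (neg x)" and "x \<in> D \<zero> y"
    using D_neg[OF _ xy(1) yD] D_neg[OF _ _ xD] xy by simp_all
  moreover have "x \<in> D y \<zero>" "y \<in> D x \<zero>"
    using D_commute \<open>x \<in> D \<zero> y\<close> yD xy zero_closed by blast+
  ultimately have "\<zero> \<in> Dt y (neg x)" and "\<zero> \<in> Dt x (neg y)"
    using xy xD by (simp_all add: mem_Dt_iff zero_in_D)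
  then show "y = x" using Dt_antisym xy by blast
next
  assume "x \<in> S" "y \<in> S" "y = x"
  then show "y \<in> Dt \<zero> x" using Dt_commute[OF _ zero_closed self_in_Dt_zero] by blast
qed

lemma Dt_assoc:
  assumes "x \<in> S" "y \<in> S" "z \<in> S"
  shows "(\<Union>a\<in>Dt x y. Dt a z) = (\<Union>a\<in>Dt y z. Dt x a)"
proof (intro equalityI subsetI)
  fix w assume "w \<in> (\<Union>a\<in>Dt x y. Dt a z)"
  then obtain a where a: "a \<in> Dt x y" "w \<in> Dt a z" by blast
  have "a \<in> S" "w \<in> S" using Dt_closed assms a by blast+
  then obtain u where "u \<in> S" "u \<in> Dt z y" "w \<in> Dt u x"
    using Dt_split[of w z a y x] Dt_commute assms a by blast
  then show "w \<in> (\<Union>a\<in>Dt y z. Dt x a)" using Dt_commute assms by blast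
next
  fix w assume "w \<in> (\<Union>a\<in>Dt y z. Dt x a)"
  then obtain a where a: "a \<in> Dt y z" "w \<in> Dt x a" by blast
  have "a \<in> S" "w \<in> S" using Dt_closed assms a by blast+
  then show "w \<in> (\<Union>a\<in>Dt x y. Dt a z)" using Dt_split[of w x a y z] assms a by blast
qed

lemma Dt_mul: "a \<in> S \<Longrightarrow> b \<in> S \<Longrightarrow> d \<in> S \<Longrightarrow> c \<in> Dt a b \<Longrightarrow> c \<cdot> d \<in> Dt (a \<cdot> d) (b \<cdot> d)"
  using Dt_closed[of a b c] D_mul by (auto simp: mem_Dt_iff neg_mul_left[symmetric])

lemma D_self_square: "a \<in> S \<Longrightarrow> c \<in> S \<Longrightarrow> c \<in> D a a \<Longrightarrow> a \<cdot> a \<cdot> c = c"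
  using mul_eq_on_D[of \<one> "a \<cdot> a" c a a] by simp

lemma Dt_self: "x \<in> S \<Longrightarrow> y \<in> S \<Longrightarrow> y \<in> Dt x x \<Longrightarrow> y = x"
proof -
  assume xy: "x \<in> S" "y \<in> S" and y: "y \<in> Dt x x"
  have "x \<cdot> x \<cdot> y = y" using D_self_square xy y by (simp add: mem_Dt_iff)
  then have "x \<in> Dt x (neg y)"
    using D_imp_Dt[OF xy(1) _ xy(1) D_refl, of "neg y"] xy by (simp add: neg_mul_right)
  moreover have "x \<in> Dt y (neg x)" using Dt_rotate xy y by blast
  ultimately show "y = x" using Dt_antisym xy by blast
qed

lemma D_self_absorb: "a \<in> S \<Longrightarrow> c \<in> S \<Longrightarrow> c \<in> D a a \<Longrightarrow> c = c \<cdot> c \<cdot> a"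
  using D_imp_Dt Dt_self by simp

lemma D_neg_self: "x \<in> S \<Longrightarrow> y \<in> S \<Longrightarrow> y \<in> D x (neg y) \<Longrightarrow> y \<cdot> y \<cdot> x = y"
proof -
  assume xy: "x \<in> S" "y \<in> S" and "y \<in> D x (neg y)"
  then have "y \<in> Dt (y \<cdot> y \<cdot> x) (neg y)"
    using D_imp_Dt[of x "neg y" y] by (simp add: neg_mul_right mul_assoc)
  then have "y \<cdot> y \<cdot> x \<in> Dt y (neg (neg y))" using Dt_rotate[of "y \<cdot> y \<cdot> x" "neg y" y] xy by simp
  then have "y \<cdot> y \<cdot> x \<in> Dt y y" using xy by simp
  then show ?thesis using Dt_self xy by simp
qed

lemma Dt_mul_square_eq: "a \<in> S \<Longrightarrow> b \<in> S \<Longrightarrow> c \<in> S \<Longrightarrow> c \<in> Dt a (a \<cdot> (b \<cdot> b)) \<Longrightarrow> c = a"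
proof -
  assume abc: "a \<in> S" "b \<in> S" "c \<in> S" and c: "c \<in> Dt a (a \<cdot> (b \<cdot> b))"
  have bba: "b \<cdot> b \<cdot> a = a \<cdot> (b \<cdot> b)" using abc by (simp add: mul_comm)
  have "c \<in> D (\<one> \<cdot> \<one> \<cdot> a) (b \<cdot> b \<cdot> a)" using c abc bba by (simp add: mem_Dt_iff)
  then have "c \<in> D a a" by (rule D_cancel_squares[OF abc(1) abc(1) one_closed abc(2) abc(3)])
  then have ca: "c = c \<cdot> c \<cdot> a" using D_self_absorb abc by blast
  have "a \<in> Dt c (neg (a \<cdot> (b \<cdot> b)))" using Dt_rotate[of a "a \<cdot> (b \<cdot> b)" c] c abc by simp
  moreover have "neg (a \<cdot> (b \<cdot> b)) = b \<cdot> b \<cdot> neg a" using abc bba by (simp add: neg_mul_right)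
  ultimately have "a \<in> D (\<one> \<cdot> \<one> \<cdot> c) (b \<cdot> b \<cdot> neg a)" using abc by (simp add: mem_Dt_iff)
  then have "a \<in> D c (neg a)" by (rule D_cancel_squares[OF abc(3) neg_closed[OF abc(1)] one_closed abc(2) abc(1)])
  then have ac: "a \<cdot> a \<cdot> c = a" using D_neg_self abc by blast
  have "c \<cdot> c \<cdot> (a \<cdot> a \<cdot> c) = a \<cdot> a \<cdot> c" using abc by (simp add: mul_ac)
  then show "c = a" using ca ac by simp
qed

lemma Dt_squares_absorb: "a \<in> S \<Longrightarrow> b \<in> S \<Longrightarrow> d \<in> S \<Longrightarrow> d \<in> Dt (a \<cdot> a) (b \<cdot> b) \<Longrightarrow> d \<cdot> (a \<cdot> a) = a \<cdot> a"
proof -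
  assume abd: "a \<in> S" "b \<in> S" "d \<in> S" and d: "d \<in> Dt (a \<cdot> a) (b \<cdot> b)"
  have aa: "a \<cdot> a \<in> S" and aa_idem: "a \<cdot> a \<cdot> (a \<cdot> a) = a \<cdot> a" using abd by (simp_all add: mul_ac)
  have "neg (a \<cdot> a) \<in> D (neg d) (neg (neg (b \<cdot> b)))" using d abd by (simp add: mem_Dt_iff)
  then have "a \<cdot> a \<in> D (\<one> \<cdot> \<one> \<cdot> d) (b \<cdot> b \<cdot> mone)"
    using D_neg_iff[of d "neg (b \<cdot> b)" "a \<cdot> a"] abd by (simp add: mul_mone)
  then have "a \<cdot> a \<in> D d mone" by (rule D_cancel_squares[OF abd(3) mone_closed one_closed abd(2) aa])
  then have "a \<cdot> a \<in> D (d \<cdot> (a \<cdot> a)) (neg (a \<cdot> a))"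
    using D_mul[OF aa abd(3) mone_closed aa] aa aa_idem by (simp add: rs_neg_def)
  then have "a \<cdot> a \<cdot> (a \<cdot> a) \<cdot> (d \<cdot> (a \<cdot> a)) = a \<cdot> a" using D_neg_self abd aa by simp
  then show ?thesis using aa_idem abd by (simp add: mul_ac)
qed

lemma Dt_squares_unique:
  "a \<in> S \<Longrightarrow> b \<in> S \<Longrightarrow> c \<in> S \<Longrightarrow> d \<in> S \<Longrightarrow> c \<in> Dt (a \<cdot> a) (b \<cdot> b) \<Longrightarrow> d \<in> Dt (a \<cdot> a) (b \<cdot> b) \<Longrightarrow>
   c = d"
proof -
  assume abcd: "a \<in> S" "b \<in> S" "c \<in> S" "d \<in> S"
    and c: "c \<in> Dt (a \<cdot> a) (b \<cdot> b)" and d: "d \<in> Dt (a \<cdot> a) (b \<cdot> b)"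
  have "x \<cdot> (a \<cdot> a) = a \<cdot> a" "x \<cdot> (b \<cdot> b) = b \<cdot> b" if "x \<in> S" "x \<in> Dt (a \<cdot> a) (b \<cdot> b)" for x
    using Dt_squares_absorb[of a b x] Dt_squares_absorb[of b a x] Dt_commute[of "a \<cdot> a" "b \<cdot> b" x]
      abcd that by simp_all
  then have "\<one> \<cdot> c = d \<cdot> c" "\<one> \<cdot> d = c \<cdot> d"
    using mul_eq_on_D[of \<one> d c "a \<cdot> a" "b \<cdot> b"] mul_eq_on_D[of \<one> c d "a \<cdot> a" "b \<cdot> b"] abcd c d
    by (simp_all add: mem_Dt_iff)
  then show "c = d" using mul_comm abcd by simp
qed

lemma multiring_assoc_mr: "multiring (assoc_mr G)"
  unfolding multiring_def Let_def assoc_mr_simps mr_set_add_def mr_add_set_def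
proof (intro conjI ballI impI)
  fix x y z assume "x \<in> S" "y \<in> S" "z \<in> S" "z \<in> Dt x y"
  then show "x \<in> Dt z (neg y)" and "y \<in> Dt (neg x) z" by (simp_all add: Dt_rotate Dt_rotate')
next
  fix a b c d assume "a \<in> S" "b \<in> S" "c \<in> S" "d \<in> S" "c \<in> Dt a b"
  then show "c \<cdot> d \<in> Dt (a \<cdot> d) (b \<cdot> d)" by (simp add: Dt_mul)
next
  fix x y assume "x \<in> S" "y \<in> S"
  then show "Dt x y = Dt y x" using Dt_commute by blast
qed (auto dest: Dt_closed simp: Dt_nonempty Dt_zero_left_iff Dt_assoc mul_ac)

lemma real_reduced_multiring_assoc_mr: "real_reduced_multiring (assoc_mr G)"
  unfolding real_reduced_multiring_def Let_def assoc_mr_simps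
  using multiring_assoc_mr one_neq_zero Dt_mul_square_eq Dt_squares_unique by (intro conjI ballI impI) auto

end

lemma rs_morphism_D:
  "rs_morphism G H f \<Longrightarrow> a \<in> rs_carrier G \<Longrightarrow> b \<in> rs_carrier G \<Longrightarrow> c \<in> rs_carrier G \<Longrightarrow>
   a \<in> rs_D G b c \<Longrightarrow> f a \<in> rs_D H (f b) (f c)"
  unfolding rs_morphism_def by blast

lemma rs_morphism_neg:
  assumes "real_semigroup G" "rs_morphism G H f" "x \<in> rs_carrier G"
  shows "f (rs_neg G x) = rs_neg H (f x)"
proof -
  have "rs_mone G \<in> rs_carrier G" using real_sgrp.mone_closed[OF real_sgrp.intro] assms(1) .
  then show ?thesis using assms(2,3) by (simp add: rs_neg_def rs_morphism_def)
qed

lemma rs_morphism_Dt: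
  assumes G: "real_semigroup G" and f: "rs_morphism G H f"
    and ab: "a \<in> rs_carrier G" "b \<in> rs_carrier G" and c: "c \<in> rs_Dt G a b"
  shows "f c \<in> rs_Dt H (f a) (f b)"
proof -
  interpret real_sgrp G by (rule real_sgrp.intro) (rule G)
  have "c \<in> S" using Dt_closed ab c by blast
  moreover have "c \<in> D a b" "neg a \<in> D (neg c) b" "neg b \<in> D a (neg c)"
    using c by (simp_all add: mem_Dt_iff)
  ultimately have "f c \<in> rs_D H (f a) (f b)" "f (neg a) \<in> rs_D H (f (neg c)) (f b)"
    "f (neg b) \<in> rs_D H (f a) (f (neg c))"
    using rs_morphism_D[OF f] ab by simp_all
  then show ?thesis using rs_morphism_neg[OF G f] ab \<open>c \<in> S\<close> by (simp add: rs_Dt_def)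
qed

lemma mr_morphism_assoc_mr:
  assumes G: "real_semigroup G" and f: "rs_morphism G H f"
  shows "mr_morphism (assoc_mr G) (assoc_mr H) f"
  unfolding mr_morphism_def assoc_mr_simps
proof (intro conjI ballI impI)
  fix a b c assume "a \<in> rs_carrier G" "b \<in> rs_carrier G" "c \<in> rs_Dt G a b"
  then show "f c \<in> rs_Dt H (f a) (f b)" by (rule rs_morphism_Dt[OF G f])
qed (use f rs_morphism_neg[OF G f] in \<open>simp_all add: rs_morphism_def\<close>)

theorem corollary6p8:
  fixes G :: "'a rsg" and H :: "'b rsg" and f :: "'a \<Rightarrow> 'b"
  assumes "real_semigroup G" and "real_semigroup H" and "rs_morphism G H f"
  shows "real_reduced_multiring (assoc_mr G) \<and> real_reduced_multiring (assoc_mr H)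
         \<and> mr_morphism (assoc_mr G) (assoc_mr H) f"
proof -
  have "real_reduced_multiring (assoc_mr G)" "real_reduced_multiring (assoc_mr H)"
    using assms(1,2) by (simp_all add: real_sgrp.intro real_sgrp.real_reduced_multiring_assoc_mr)
  then show ?thesis using mr_morphism_assoc_mr[OF assms(1,3)] by blast
qed

end
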